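(* For complex $a,c$ with $|ac/q|<1$, \begin{align*} \frac{\bigl(q^2, ac; q^2\bigr)_\infty}{\bigl(q^2 a, q^2 c; q^2\bigr)_\infty}\sum_{n=0}^\infty \frac{\bigl(q^2/a, q^2/c; q^2\bigr)_n (ac/q)^n}{(q; q)_{2n} \bigl(1+q^{2n+1}\bigr)} =\sum_{n=0}^\infty \sum_{j=-n}^n \bigl(1-q^{2n+1}\bigr) q^{n^2-j^2-j}\frac{\bigl(q^2/a, q^2/c; q^2\bigr)_n (ac)^n}{\bigl(q^2 a, q^2 c; q^2\bigr)_n}. \end{align*}
   Context: Throughout, $q$ is a complex number with $0<|q|<1$. For $x\in\mathbb{C}$ and base $p\in\{q,q^2\}$, $(x;p)_\infty=\prod_{k=0}^\infty(1-xp^k)$ and, for an integer $n\ge 0$, $(x;p)_n=\prod_{k=0}^{n-1}(1-xp^k)$; also $(x_1,\dots,x_m;p)_n=(x_1;p)_n\cdots(x_m;p)_n$ for $n$ an integer or $\infty$. *)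

theory Defs
  imports "HOL-Analysis.Analysis"
begin

definition qpoch :: "complex \<Rightarrow> complex \<Rightarrow> nat \<Rightarrow> complex" where
  "qpoch x p n = (\<Prod>k<n. 1 - x * p ^ k)"

definition qpoch_inf :: "complex \<Rightarrow> complex \<Rightarrow> complex" where
  "qpoch_inf x p = (\<Prod>k. 1 - x * p ^ k)"

end

theory Submission
  imports Defs
begin

(*
  With p = q^2, the sequences
    beta_n  = 1 / (q^n (q;q)_{2n} (1 + q^{2n+1})),
    alpha_r = (1 - q^{2r+1}) sum_{|j| <= r} q^{r^2 - j^2 - j}
  form a Bailey pair: beta_n = sum_{r <= n} alpha_r / ((p;p)_{n-r} (p;p)_{n+r+1}).
  To see this, sum over r first: the inner sums telescope, and what remains is the
  Rogers-Szego polynomial H_{2n}(q; q^2) = (q^2;q^2)_{2n} / (q;q)_{2n}.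
  The theorem is the limiting form of Bailey's lemma for this pair. Insert the pair into
  sum_n (p/a;p)_n (p/c;p)_n (ac)^n beta_n and exchange the order of the absolutely
  convergent double sum. Each inner sum is then a 2phi1 series at argument C/(AB), which
  the q-Gauss summation (proved by Heine's contiguity argument) evaluates as an infinite
  product; what is left is the alpha-side series times the product in the statement.
*)

lemma summable_of_nat_Suc_mult_power:
  fixes x :: real
  assumes "0 \<le> x" "x < 1"
  shows "summable (\<lambda>k. real (Suc k) * x ^ k)"
proof -
  have geometric: "summable (\<lambda>k. norm (x ^ k))"
    unfolding norm_power by (rule summable_geometric) (use assms in simp)
  have "summable (\<lambda>k. \<Sum>i\<le>k. x ^ i * x ^ (k - i))"
    by (rule summable_Cauchy_product[OF geometric geometric])
  moreover have "(\<Sum>i\<le>k. x ^ i * x ^ (k - i)) = real (Suc k) * x ^ k" for k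
    by (simp flip: power_add)
  ultimately show ?thesis
    by simp
qed

lemma summable_on_product_nonneg:
  fixes u v :: "nat \<Rightarrow> real"
  assumes "\<And>r. u r \<ge> 0" "summable u" "\<And>m. v m \<ge> 0" "summable v"
  shows "(\<lambda>(r, m). u r * v m) summable_on UNIV"
proof -
  have "u summable_on UNIV" "v summable_on UNIV"
    using assms by (auto intro!: norm_summable_imp_summable_on)
  then have "(\<lambda>(r, m). u r * v m) summable_on Sigma UNIV (\<lambda>_. UNIV)"
    using assms by (intro summable_on_SigmaI[where g = "\<lambda>r. u r * infsum v UNIV"])
      (auto intro: has_sum_cmult_right summable_on_cmult_left)
  then show ?thesis
    by simp
qed

lemma diagonal_sums_eq_row_sums:
  fixes h :: "nat \<times> nat \<Rightarrow> 'a :: banach" and u v :: "nat \<Rightarrow> real"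
  assumes bound: "\<And>r m. norm (h (r, m)) \<le> u r * v m"
    and u: "\<And>r. u r \<ge> 0" "summable u" and v: "\<And>m. v m \<ge> 0" "summable v"
    and rows: "\<And>r. (\<lambda>m. h (r, m)) sums g r"
  obtains S where "(\<lambda>n. \<Sum>r\<le>n. h (r, n - r)) sums S" and "g sums S"
proof
  have "(\<lambda>x. norm (h x)) summable_on UNIV"
    by (rule Infinite_Sum.abs_summable_on_comparison_test'[OF summable_on_product_nonneg[OF u v]])
      (auto simp: bound split: prod.split)
  then have h: "(h has_sum infsum h UNIV) (Sigma UNIV (\<lambda>_. UNIV))"
    by (simp add: abs_summable_summable)
  have "((\<lambda>(n, r). h (r, n - r)) has_sum infsum h UNIV) (Sigma UNIV (\<lambda>n. {..n}))
      = (h has_sum infsum h UNIV) (Sigma UNIV (\<lambda>_. UNIV))"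
    by (rule has_sum_reindex_bij_witness[where i = "\<lambda>(r, m). (r + m, r)"
          and j = "\<lambda>(n, r). (r, n - r)"]) auto
  then have "((\<lambda>(n, r). h (r, n - r)) has_sum infsum h UNIV) (Sigma UNIV (\<lambda>n. {..n}))"
    using h by simp
  then have "((\<lambda>n. \<Sum>r\<le>n. h (r, n - r)) has_sum infsum h UNIV) UNIV"
    by (rule has_sum_SigmaD) (simp add: has_sum_finiteI)
  then show "(\<lambda>n. \<Sum>r\<le>n. h (r, n - r)) sums infsum h UNIV"
    by (rule has_sum_imp_sums)
  have "((\<lambda>m. h (r, m)) has_sum g r) UNIV" for r
  proof (rule norm_summable_imp_has_sum[OF _ rows])
    show "summable (\<lambda>m. norm (h (r, m)))"
      by (rule summable_comparison_test'[where N = 0, OF summable_mult[OF v(2), of "u r"]]) (simp add: bound)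
  qed
  then have "(g has_sum infsum h UNIV) UNIV"
    by (rule has_sum_SigmaD[OF h])
  then show "g sums infsum h UNIV"
    by (rule has_sum_imp_sums)
qed

lemma qpoch_0 [simp]: "qpoch x p 0 = 1"
  by (simp add: qpoch_def)

lemma qpoch_Suc: "qpoch x p (Suc n) = qpoch x p n * (1 - x * p ^ n)"
  by (simp add: qpoch_def)

lemma qpoch_0_left [simp]: "qpoch 0 p n = 1"
  by (simp add: qpoch_def)

lemma tendsto_qpoch [tendsto_intros]:
  "(f \<longlongrightarrow> x) F \<Longrightarrow> ((\<lambda>y. qpoch (f y) p n) \<longlongrightarrow> qpoch x p n) F"
  unfolding qpoch_def by (intro tendsto_intros)

lemma qpoch_add: "qpoch x p (n + m) = qpoch x p n * qpoch (x * p ^ n) p m"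
  by (induction m) (simp_all add: qpoch_Suc power_add mult_ac)

lemma qpoch_self_Suc: "qpoch p p (Suc n) = qpoch p p n * (1 - p ^ Suc n)"
  by (simp add: qpoch_Suc)

lemma qpoch_square_Suc:
  "qpoch (q^2) (q^2) (Suc n) = qpoch (q^2) (q^2) n * (1 - q ^ (2 * n + 2))"
  by (simp add: qpoch_Suc power_mult[symmetric] power_add[symmetric] mult.commute)

lemma qpoch_eq_0_iff: "qpoch x p n = 0 \<longleftrightarrow> (\<exists>k<n. x * p ^ k = 1)"
  by (auto simp: qpoch_def)

lemma all_qpoch_neq_0_iff: "(\<forall>n. qpoch x p n \<noteq> 0) \<longleftrightarrow> (\<forall>k. x * p ^ k \<noteq> 1)"
  by (auto simp: qpoch_eq_0_iff)

lemma one_pm_power_neq_0: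
  fixes p :: complex
  assumes "norm p < 1" "k > 0"
  shows "1 - p ^ k \<noteq> 0" "1 + p ^ k \<noteq> 0"
proof -
  have "norm (p ^ k) < 1"
    using assms by (simp add: norm_power power_less_one_iff)
  then show "1 - p ^ k \<noteq> 0" "1 + p ^ k \<noteq> 0"
    by (auto simp: add_eq_0_iff)
qed

lemma norm_mult_power_le:
  fixes z p :: complex
  assumes "norm p \<le> 1"
  shows "norm (z * p ^ k) \<le> norm z"
  using assms by (simp add: norm_mult norm_power mult_left_le power_le_one)

lemma mult_power_neq_1:
  fixes z p :: complex
  assumes "norm z < 1" "norm p \<le> 1"
  shows "z * p ^ k \<noteq> 1"
  using norm_mult_power_le[OF assms(2), of z k] assms(1) by auto

lemma self_mult_power_neq_1:
  fixes p :: complex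
  assumes "norm p < 1"
  shows "p * p ^ k \<noteq> 1"
  using one_pm_power_neq_0(1)[OF assms, of "Suc k"] by simp

lemma qpoch_self_neq_0:
  fixes p :: complex
  assumes "norm p < 1"
  shows "qpoch p p n \<noteq> 0"
  using self_mult_power_neq_1[OF assms] by (auto simp: qpoch_eq_0_iff)

lemma convergent_prod_qpoch:
  fixes x p :: complex
  assumes "norm p < 1"
  shows "convergent_prod (\<lambda>k. 1 - x * p ^ k)"
proof -
  have "summable (\<lambda>k. norm x * norm p ^ k)"
    using assms by (intro summable_mult summable_geometric) auto
  then show ?thesis
    by (intro abs_convergent_prod_imp_convergent_prod summable_imp_abs_convergent_prod)
       (simp add: norm_mult norm_power)
qed

lemma qpoch_tendsto_qpoch_inf:
  fixes x p :: complex
  assumes "norm p < 1"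
  shows "qpoch x p \<longlonglongrightarrow> qpoch_inf x p"
proof -
  have "(\<lambda>n. qpoch x p (Suc n)) \<longlonglongrightarrow> qpoch_inf x p"
    using convergent_prod_LIMSEQ[OF convergent_prod_qpoch[OF assms]]
    by (simp add: qpoch_def qpoch_inf_def lessThan_Suc_atMost)
  then show ?thesis
    by (rule LIMSEQ_imp_Suc)
qed

lemma qpoch_inf_neq_0:
  fixes x p :: complex
  assumes "norm p < 1" "\<And>k. x * p ^ k \<noteq> 1"
  shows "qpoch_inf x p \<noteq> 0"
  unfolding qpoch_inf_def
  by (rule prodinf_nonzero[OF convergent_prod_qpoch[OF assms(1)]]) (use assms(2) in auto)

lemma qpoch_inf_split:
  fixes x p :: complex
  assumes "norm p < 1"
  shows "qpoch_inf x p = qpoch x p n * qpoch_inf (x * p ^ n) p"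
proof (rule LIMSEQ_unique)
  show "(\<lambda>m. qpoch x p (m + n)) \<longlonglongrightarrow> qpoch_inf x p"
    using LIMSEQ_ignore_initial_segment[OF qpoch_tendsto_qpoch_inf[OF assms]] .
  show "(\<lambda>m. qpoch x p (m + n)) \<longlonglongrightarrow> qpoch x p n * qpoch_inf (x * p ^ n) p"
    unfolding add.commute[of _ n] qpoch_add
    by (intro tendsto_mult tendsto_const qpoch_tendsto_qpoch_inf assms)
qed

lemma qpoch_inf_neq_0_if_qpoch_neq_0:
  fixes x p :: complex
  assumes "norm p < 1" "\<And>n. qpoch x p n \<noteq> 0"
  shows "qpoch_inf x p \<noteq> 0"
  using qpoch_inf_neq_0[OF assms(1)] assms(2) all_qpoch_neq_0_iff by blast

lemma Bseq_qpoch: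
  fixes x p :: complex
  assumes "norm p < 1"
  shows "Bseq (qpoch x p)"
  using qpoch_tendsto_qpoch_inf[OF assms] by (intro convergent_imp_Bseq convergentI)

lemma Bseq_inverse_qpoch:
  fixes x p :: complex
  assumes "norm p < 1" "\<And>k. x * p ^ k \<noteq> 1"
  shows "Bseq (\<lambda>n. inverse (qpoch x p n))"
  using tendsto_inverse[OF qpoch_tendsto_qpoch_inf qpoch_inf_neq_0, OF assms(1) assms]
  by (intro convergent_imp_Bseq convergentI)

section \<open>The q-Gauss summation\<close>

definition phi21_term ::
    "complex \<Rightarrow> complex \<Rightarrow> complex \<Rightarrow> complex \<Rightarrow> complex \<Rightarrow> nat \<Rightarrow> complex" where
  "phi21_term A B C z p m = qpoch A p m * qpoch B p m * z ^ m / (qpoch p p m * qpoch C p m)"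

lemma phi21_term_uniform_bound:
  fixes A B C p :: complex
  assumes p: "norm p < 1" and C: "\<And>k. C * p ^ k \<noteq> 1"
  obtains M where "\<And>K w m. norm (phi21_term A B (C * p ^ K) w p m) \<le> M * norm w ^ m"
proof -
  obtain BA where BA: "BA > 0" "\<forall>n. norm (qpoch A p n) \<le> BA"
    using Bseq_qpoch[OF p] by (rule BseqE)
  obtain BB where BB: "BB > 0" "\<forall>n. norm (qpoch B p n) \<le> BB"
    using Bseq_qpoch[OF p] by (rule BseqE)
  obtain BC where BC: "BC > 0" "\<forall>n. norm (qpoch C p n) \<le> BC"
    using Bseq_qpoch[OF p] by (rule BseqE)
  obtain IP where IP: "IP > 0" "\<forall>n. norm (inverse (qpoch p p n)) \<le> IP"
    using Bseq_inverse_qpoch[OF p self_mult_power_neq_1[OF p]] by (rule BseqE)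
  obtain IC where IC: "IC > 0" "\<forall>n. norm (inverse (qpoch C p n)) \<le> IC"
    using Bseq_inverse_qpoch[OF p C] by (rule BseqE)
  show ?thesis
  proof (rule that[of "BA * BB * IP * (BC * IC)"])
    fix K w m
    have "qpoch C p K \<noteq> 0"
      using C by (auto simp: qpoch_eq_0_iff)
    then have shift: "inverse (qpoch (C * p ^ K) p m) = qpoch C p K * inverse (qpoch C p (K + m))"
      by (simp add: qpoch_add)
    have "norm (phi21_term A B (C * p ^ K) w p m)
        = norm (qpoch A p m) * norm (qpoch B p m) * norm (inverse (qpoch p p m))
          * norm (inverse (qpoch (C * p ^ K) p m)) * norm w ^ m"
      by (simp add: phi21_term_def norm_mult norm_power norm_divide norm_inverse field_simps)
    also have "\<dots> \<le> BA * BB * IP * (BC * IC) * norm w ^ m"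
      unfolding shift norm_mult
      by (intro mult_mono BA(2)[rule_format] BB(2)[rule_format] IP(2)[rule_format] BC(2)[rule_format]
          IC(2)[rule_format] order.refl) (use BA BB IP BC IC in auto)
    finally show "norm (phi21_term A B (C * p ^ K) w p m) \<le> BA * BB * IP * (BC * IC) * norm w ^ m" .
  qed
qed

lemma phi21_term_shift:
  fixes A B C z p :: complex
  assumes "1 - C \<noteq> 0"
  shows "phi21_term A B (C * p) (z * p) p m
       = phi21_term A B C z p m * p ^ m * (1 - C) / (1 - C * p ^ m)"
proof -
  have "qpoch (C * p) p m = qpoch C p m * (1 - C * p ^ m) / (1 - C)"
    using qpoch_add[of C p 1 m] assms by (simp add: qpoch_Suc)
  then show ?thesis
    unfolding phi21_term_def
    by (simp add: power_mult_distrib divide_inverse mult_ac)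
qed

lemma phi21_term_Suc:
  fixes A B C z p :: complex
  shows "phi21_term A B C z p (Suc m)
       = phi21_term A B C z p m * (1 - A * p ^ m) * (1 - B * p ^ m) * z
         / ((1 - p ^ Suc m) * (1 - C * p ^ m))"
  by (simp add: phi21_term_def qpoch_Suc field_simps)

lemma phi21_term_contiguity:
  fixes A B C z p :: complex
  assumes ABC: "A * B * z = C"
    and C: "1 - C \<noteq> 0" "1 - C * p ^ m \<noteq> 0" and p: "1 - p ^ Suc m \<noteq> 0"
  shows "(1 - z) * phi21_term A B C z p m
           - (1 - A * z) * (1 - B * z) / (1 - C) * phi21_term A B (C * p) (z * p) p m
       = (1 - p ^ m) * phi21_term A B C z p m - (1 - p ^ Suc m) * phi21_term A B C z p (Suc m)"
proof -
  define x where "x = p ^ m"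
  define T where "T = phi21_term A B C z p m"
  define X where "X = (1 - A * z) * (1 - B * z) * x / (1 - C * x)"
  define Y where "Y = (1 - A * x) * (1 - B * x) * z / (1 - C * x)"
  have "(1 - z) - X = ((1 - z) * (1 - C * x) - (1 - A * z) * (1 - B * z) * x) / (1 - C * x)"
    using C(2) by (simp add: X_def x_def field_simps)
  also have "(1 - z) * (1 - C * x) - (1 - A * z) * (1 - B * z) * x
      = (1 - x) * (1 - C * x) - (1 - A * x) * (1 - B * x) * z"
    unfolding ABC[symmetric] by algebra
  also have "\<dots> / (1 - C * x) = (1 - x) - Y"
    using C(2) by (simp add: Y_def x_def field_simps)
  finally have key: "(1 - z) - X = (1 - x) - Y" .
  have "(1 - A * z) * (1 - B * z) / (1 - C) * phi21_term A B (C * p) (z * p) p m = T * X"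
    unfolding phi21_term_shift[OF C(1)] T_def X_def x_def using C(1) by simp
  moreover have "(1 - p ^ Suc m) * phi21_term A B C z p (Suc m) = T * Y"
    unfolding phi21_term_Suc T_def Y_def x_def using p by simp
  moreover have "(1 - z) * T - T * X = (1 - x) * T - T * Y"
    using arg_cong[OF key, of "\<lambda>u. T * u"] by (simp add: algebra_simps)
  ultimately show ?thesis
    unfolding T_def x_def by simp
qed

lemma summable_norm_phi21_term:
  fixes A B C z p :: complex
  assumes p: "norm p < 1" and C: "\<And>k. C * p ^ k \<noteq> 1" and z: "norm z < 1"
  shows "summable (\<lambda>m. norm (phi21_term A B C z p m))"
proof -
  obtain M where M: "\<And>K w m. norm (phi21_term A B (C * p ^ K) w p m) \<le> M * norm w ^ m"
    using phi21_term_uniform_bound[OF p C] by blast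
  show ?thesis
    by (rule summable_comparison_test'[where N = 0, OF summable_mult[OF summable_geometric]])
       (use M[of 0] z in auto)
qed

lemma phi21_contiguity:
  fixes A B C z p :: complex
  assumes p: "norm p < 1" and z: "norm z < 1" and ABC: "A * B * z = C"
    and C: "\<And>k. C * p ^ k \<noteq> 1"
  shows "(1 - z) * suminf (phi21_term A B C z p)
       = (1 - A * z) * (1 - B * z) / (1 - C) * suminf (phi21_term A B (C * p) (z * p) p)"
proof -
  define T where "T = phi21_term A B C z p"
  define T' where "T' = phi21_term A B (C * p) (z * p) p"
  define c where "c = (1 - A * z) * (1 - B * z) / (1 - C)"
  have Cp: "(C * p) * p ^ k \<noteq> 1" for k
    using C[of "Suc k"] by (simp add: mult.assoc)
  have zp: "norm (z * p) < 1"
    using mult_strict_mono[of "norm z" 1 "norm p" 1] p z by (simp add: norm_mult)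
  have "(\<lambda>m. (1 - p ^ m) * T m) \<longlonglongrightarrow> (1 - 0) * 0"
    unfolding T_def
    by (intro tendsto_mult tendsto_diff tendsto_const LIMSEQ_power_zero p summable_LIMSEQ_zero
        summable_norm_cancel[OF summable_norm_phi21_term[OF p C z]])
  then have "(\<lambda>m. (1 - p ^ m) * T m - (1 - p ^ Suc m) * T (Suc m)) sums 0"
    using telescope_sums' by fastforce
  moreover have "(1 - z) * T m - c * T' m = (1 - p ^ m) * T m - (1 - p ^ Suc m) * T (Suc m)" for m
    unfolding T_def T'_def c_def
    by (rule phi21_term_contiguity[OF ABC])
       (use C[of 0] C[of m] one_pm_power_neq_0(1)[OF p, of "Suc m"] in auto)
  moreover have "(\<lambda>m. (1 - z) * T m - c * T' m) sums ((1 - z) * suminf T - c * suminf T')"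
    using summable_norm_cancel[OF summable_norm_phi21_term[OF p C z]]
      summable_norm_cancel[OF summable_norm_phi21_term[OF p Cp zp]]
    unfolding T_def T'_def by (intro sums_diff sums_mult summable_sums)
  ultimately show ?thesis
    unfolding T_def T'_def c_def by (simp add: sums_iff)
qed

lemma phi21_tail_tendsto_1:
  fixes A B C z p :: complex
  assumes p: "norm p < 1" and z: "norm z < 1" and C: "\<And>k. C * p ^ k \<noteq> 1"
  shows "(\<lambda>K. suminf (phi21_term A B (C * p ^ K) (z * p ^ K) p)) \<longlonglongrightarrow> 1"
proof -
  obtain M where M: "\<And>K w m. norm (phi21_term A B (C * p ^ K) w p m) \<le> M * norm w ^ m"
    using phi21_term_uniform_bound[OF p C] by blast
  have bound: "norm (phi21_term A B (C * p ^ K) (z * p ^ K) p m) \<le> M * norm z ^ m" for K m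
  proof -
    have "M \<ge> 0"
      using order_trans[OF norm_ge_zero M[of 0 0 0]] by simp
    with norm_mult_power_le[of p z K] p show ?thesis
      by (intro order_trans[OF M] mult_left_mono power_mono) auto
  qed
  have "(\<lambda>K. C * p ^ K) \<longlonglongrightarrow> 0" "(\<lambda>K. z * p ^ K) \<longlonglongrightarrow> 0"
    by (intro tendsto_mult_right_zero LIMSEQ_power_zero p)+
  then have lim: "(\<lambda>K. phi21_term A B (C * p ^ K) (z * p ^ K) p m) \<longlonglongrightarrow> phi21_term A B 0 0 p m"
    for m
    unfolding phi21_term_def
    by (intro tendsto_intros) (simp_all add: qpoch_self_neq_0[OF p])
  have "eventually (\<lambda>(m, K). norm (phi21_term A B (C * p ^ K) (z * p ^ K) p m) \<le> M * norm z ^ m)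
          (at_top \<times>\<^sub>F sequentially)"
    using bound by (intro always_eventually) auto
  moreover have "summable (\<lambda>m. M * norm z ^ m)"
    using z by (intro summable_mult summable_geometric) simp
  ultimately have "(\<lambda>K. suminf (phi21_term A B (C * p ^ K) (z * p ^ K) p))
               \<longlonglongrightarrow> suminf (phi21_term A B 0 0 p)"
    using tannerys_theorem[OF lim] by simp
  moreover have "phi21_term A B 0 0 p = (\<lambda>m. if m = 0 then 1 else 0)"
    by (simp add: fun_eq_iff phi21_term_def power_0_left)
  then have "phi21_term A B 0 0 p sums 1"
    using sums_single[of 0 "\<lambda>_. 1 :: complex"] by simp
  ultimately show ?thesis
    by (simp add: sums_iff)
qed

lemma phi21_shift_recurrence:
  fixes A B C z p :: complex
  assumes p: "norm p < 1" and z: "norm z < 1" and ABC: "A * B * z = C"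
    and C: "\<And>k. C * p ^ k \<noteq> 1"
  shows "(1 - C * p ^ K) * (1 - z * p ^ K) * suminf (phi21_term A B (C * p ^ K) (z * p ^ K) p)
       = (1 - A * z * p ^ K) * (1 - B * z * p ^ K)
           * suminf (phi21_term A B (C * p ^ Suc K) (z * p ^ Suc K) p)"
proof -
  have "norm (z * p ^ K) < 1"
    using norm_mult_power_le[of p z K] p z by simp
  moreover have "A * B * (z * p ^ K) = C * p ^ K"
    using ABC by (simp add: mult.assoc)
  moreover have "(C * p ^ K) * p ^ k \<noteq> 1" for k
    using C[of "K + k"] by (simp add: power_add mult.assoc)
  ultimately have "(1 - z * p ^ K) * suminf (phi21_term A B (C * p ^ K) (z * p ^ K) p)
      = (1 - A * z * p ^ K) * (1 - B * z * p ^ K) / (1 - C * p ^ K)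
          * suminf (phi21_term A B (C * p ^ Suc K) (z * p ^ Suc K) p)"
    using phi21_contiguity[OF p] by (simp add: mult_ac)
  then show ?thesis
    using C[of K] by (simp add: field_simps)
qed

theorem q_gauss_sums:
  fixes A B C z p :: complex
  assumes p: "norm p < 1" and z: "norm z < 1" and ABC: "A * B * z = C"
    and C: "\<And>k. C * p ^ k \<noteq> 1"
  shows "phi21_term A B C z p sums
           (qpoch_inf (A * z) p * qpoch_inf (B * z) p / (qpoch_inf C p * qpoch_inf z p))"
proof -
  define G where "G K = suminf (phi21_term A B (C * p ^ K) (z * p ^ K) p)" for K
  have step: "(1 - C * p ^ K) * (1 - z * p ^ K) * G K
            = (1 - A * z * p ^ K) * (1 - B * z * p ^ K) * G (Suc K)" for K
    unfolding G_def by (rule phi21_shift_recurrence[OF p z ABC C])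
  have partial: "qpoch C p K * qpoch z p K * G 0 = qpoch (A * z) p K * qpoch (B * z) p K * G K" for K
  proof (induction K)
    case (Suc K)
    have "qpoch C p (Suc K) * qpoch z p (Suc K) * G 0
        = (1 - C * p ^ K) * (1 - z * p ^ K) * (qpoch C p K * qpoch z p K * G 0)"
      by (simp add: qpoch_Suc mult_ac)
    also have "\<dots> = qpoch (A * z) p K * qpoch (B * z) p K * ((1 - C * p ^ K) * (1 - z * p ^ K) * G K)"
      unfolding Suc.IH by (simp add: mult_ac)
    also have "\<dots> = qpoch (A * z) p (Suc K) * qpoch (B * z) p (Suc K) * G (Suc K)"
      unfolding step by (simp add: qpoch_Suc mult_ac)
    finally show ?case .
  qed simp
  have "(\<lambda>K. qpoch C p K * qpoch z p K * G 0) \<longlonglongrightarrow> qpoch_inf C p * qpoch_inf z p * G 0"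
    by (intro tendsto_intros qpoch_tendsto_qpoch_inf p)
  moreover have "(\<lambda>K. qpoch C p K * qpoch z p K * G 0) \<longlonglongrightarrow> qpoch_inf (A * z) p * qpoch_inf (B * z) p * 1"
    unfolding partial unfolding G_def
    by (intro tendsto_intros qpoch_tendsto_qpoch_inf phi21_tail_tendsto_1 p z C)
  ultimately have "qpoch_inf C p * qpoch_inf z p * G 0 = qpoch_inf (A * z) p * qpoch_inf (B * z) p"
    using LIMSEQ_unique by fastforce
  moreover have "qpoch_inf C p \<noteq> 0"
    by (rule qpoch_inf_neq_0[OF p C])
  moreover have "qpoch_inf z p \<noteq> 0"
    using mult_power_neq_1[OF z] p by (intro qpoch_inf_neq_0[OF p]) simp
  ultimately have "suminf (phi21_term A B C z p)
      = qpoch_inf (A * z) p * qpoch_inf (B * z) p / (qpoch_inf C p * qpoch_inf z p)"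
    by (simp add: G_def field_simps)
  moreover have "summable (phi21_term A B C z p)"
    by (rule summable_norm_cancel[OF summable_norm_phi21_term[OF p C z]])
  ultimately show ?thesis
    by (simp add: sums_iff)
qed

section \<open>Bailey's lemma\<close>

(* The double series alpha_r (ac)^r bailey_weight p a c r m has the beta-side terms as its
   diagonal sums (r + m = n) and 2phi1 series as its rows. *)
definition bailey_weight ::
    "complex \<Rightarrow> complex \<Rightarrow> complex \<Rightarrow> nat \<Rightarrow> nat \<Rightarrow> complex" where
  "bailey_weight p a c r m = qpoch (p / a) p (r + m) * qpoch (p / c) p (r + m) * (a * c) ^ m
     / (qpoch p p m * qpoch p p (m + 2 * r + 1))"

lemma bailey_weight_diagonal:
  assumes "r \<le> n"
  shows "(a * c) ^ r * bailey_weight p a c r (n - r)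
       = qpoch (p / a) p n * qpoch (p / c) p n * (a * c) ^ n / (qpoch p p (n - r) * qpoch p p (n + r + 1))"
proof -
  have "n - r + 2 * r + 1 = n + r + 1" "r + (n - r) = n"
    using assms by auto
  moreover have "(a * c) ^ r * (a * c) ^ (n - r) = (a * c) ^ n"
    using assms by (simp flip: power_add)
  ultimately show ?thesis
    by (simp add: bailey_weight_def field_simps)
qed

lemma bailey_weight_bound:
  fixes p a c :: complex
  assumes p: "norm p < 1"
  obtains M where "M \<ge> 0" "\<And>r m. norm (bailey_weight p a c r m) \<le> M * norm (a * c) ^ m"
proof -
  obtain B1 where B1: "B1 > 0" "\<forall>n. norm (qpoch (p / a) p n) \<le> B1"
    using Bseq_qpoch[OF p] by (rule BseqE)
  obtain B2 where B2: "B2 > 0" "\<forall>n. norm (qpoch (p / c) p n) \<le> B2"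
    using Bseq_qpoch[OF p] by (rule BseqE)
  obtain IP where IP: "IP > 0" "\<forall>n. norm (inverse (qpoch p p n)) \<le> IP"
    using Bseq_inverse_qpoch[OF p self_mult_power_neq_1[OF p]] by (rule BseqE)
  show ?thesis
  proof (rule that[of "B1 * B2 * IP * IP"])
    fix r m
    have "norm (bailey_weight p a c r m) = norm (qpoch (p / a) p (r + m)) * norm (qpoch (p / c) p (r + m))
        * norm (inverse (qpoch p p m)) * norm (inverse (qpoch p p (m + 2 * r + 1))) * norm (a * c) ^ m"
      by (simp add: bailey_weight_def norm_mult norm_power norm_divide norm_inverse field_simps)
    also have "\<dots> \<le> B1 * B2 * IP * IP * norm (a * c) ^ m"
      by (intro mult_mono B1(2)[rule_format] B2(2)[rule_format] IP(2)[rule_format] order.refl)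
        (use B1 B2 IP in auto)
    finally show "norm (bailey_weight p a c r m) \<le> B1 * B2 * IP * IP * norm (a * c) ^ m" .
  qed (use B1 B2 IP in simp)
qed

lemma bailey_weight_sums:
  fixes p a c :: complex
  assumes p: "norm p < 1" and a: "a \<noteq> 0" and c: "c \<noteq> 0" and ac: "norm (a * c) < 1"
    and pa: "\<And>n. qpoch (p * a) p n \<noteq> 0" and pc: "\<And>n. qpoch (p * c) p n \<noteq> 0"
  shows "bailey_weight p a c r
         sums (qpoch (p / a) p r * qpoch (p / c) p r / (qpoch (p * a) p r * qpoch (p * c) p r)
               * (qpoch_inf (p * a) p * qpoch_inf (p * c) p / (qpoch_inf p p * qpoch_inf (a * c) p)))"
proof -
  define A where "A = p / a * p ^ r"
  define B where "B = p / c * p ^ r"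
  define C where "C = p * p ^ (2 * r + 1)"
  define K where "K = qpoch (p / a) p r * qpoch (p / c) p r / qpoch p p (2 * r + 1)"
  have "A * B * (a * c) = C"
    using a c by (simp add: A_def B_def C_def field_simps power_add power_mult power2_eq_square)
  moreover have C: "C * p ^ k \<noteq> 1" for k
    using one_pm_power_neq_0(1)[OF p, of "2 * r + 2 + k"] by (simp add: C_def power_add mult_ac)
  ultimately have "phi21_term A B C (a * c) p sums
      (qpoch_inf (A * (a * c)) p * qpoch_inf (B * (a * c)) p / (qpoch_inf C p * qpoch_inf (a * c) p))"
    by (rule q_gauss_sums[OF p ac])
  moreover have "A * (a * c) = p * c * p ^ r" "B * (a * c) = p * a * p ^ r"
    using a c by (simp_all add: A_def B_def)
  ultimately have "phi21_term A B C (a * c) p sums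
      (qpoch_inf (p * c * p ^ r) p * qpoch_inf (p * a * p ^ r) p / (qpoch_inf C p * qpoch_inf (a * c) p))"
    by (simp only:)
  then have "(\<lambda>m. K * phi21_term A B C (a * c) p m) sums
      (K * (qpoch_inf (p * c * p ^ r) p * qpoch_inf (p * a * p ^ r) p / (qpoch_inf C p * qpoch_inf (a * c) p)))"
    by (rule sums_mult)
  moreover have "K * phi21_term A B C (a * c) p m = bailey_weight p a c r m" for m
  proof -
    have "m + 2 * r + 1 = (2 * r + 1) + m"
      by simp
    then have "qpoch p p (m + 2 * r + 1) = qpoch p p (2 * r + 1) * qpoch C p m"
      by (simp only: qpoch_add[of p p "2 * r + 1" m] C_def)
    moreover have "qpoch (p / a) p (r + m) = qpoch (p / a) p r * qpoch A p m"
      "qpoch (p / c) p (r + m) = qpoch (p / c) p r * qpoch B p m"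
      unfolding A_def B_def by (rule qpoch_add)+
    ultimately show ?thesis
      by (simp add: K_def phi21_term_def bailey_weight_def divide_inverse mult_ac)
  qed
  moreover have "qpoch_inf p p = qpoch p p (2 * r + 1) * qpoch_inf C p"
    unfolding C_def by (rule qpoch_inf_split[OF p])
  moreover have "qpoch_inf (p * a) p = qpoch (p * a) p r * qpoch_inf (p * a * p ^ r) p"
    "qpoch_inf (p * c) p = qpoch (p * c) p r * qpoch_inf (p * c * p ^ r) p"
    by (rule qpoch_inf_split[OF p])+
  ultimately show ?thesis
    using pa[of r] pc[of r] by (simp add: K_def field_simps)
qed

lemma bailey_lemma_sums:
  fixes p a c :: complex and \<alpha> \<beta> :: "nat \<Rightarrow> complex"
  assumes p: "norm p < 1" and a: "a \<noteq> 0" and c: "c \<noteq> 0" and ac: "norm (a * c) < 1"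
    and pa: "\<And>n. qpoch (p * a) p n \<noteq> 0" and pc: "\<And>n. qpoch (p * c) p n \<noteq> 0"
    and \<alpha>: "summable (\<lambda>r. norm (\<alpha> r) * norm (a * c) ^ r)"
    and \<beta>: "\<And>n. \<beta> n = (\<Sum>r\<le>n. \<alpha> r / (qpoch p p (n - r) * qpoch p p (n + r + 1)))"
  obtains S where "(\<lambda>n. qpoch (p / a) p n * qpoch (p / c) p n * (a * c) ^ n * \<beta> n) sums S"
    and "(\<lambda>n. qpoch (p / a) p n * qpoch (p / c) p n * (a * c) ^ n * \<alpha> n
                / (qpoch (p * a) p n * qpoch (p * c) p n))
         sums (qpoch_inf p p * qpoch_inf (a * c) p / (qpoch_inf (p * a) p * qpoch_inf (p * c) p) * S)"
proof -
  define W where "W = qpoch_inf (p * a) p * qpoch_inf (p * c) p / (qpoch_inf p p * qpoch_inf (a * c) p)"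
  define h where "h = (\<lambda>(r, m). \<alpha> r * (a * c) ^ r * bailey_weight p a c r m)"
  obtain M where M: "M \<ge> 0" "\<And>r m. norm (bailey_weight p a c r m) \<le> M * norm (a * c) ^ m"
    using bailey_weight_bound[OF p] by blast
  have bound: "norm (h (r, m)) \<le> (norm (\<alpha> r) * norm (a * c) ^ r) * (M * norm (a * c) ^ m)" for r m
    using M(2)[of r m] by (simp add: h_def norm_mult norm_power mult_left_mono mult.assoc)
  have row_sums: "(\<lambda>m. h (r, m)) sums (\<alpha> r * (a * c) ^ r
      * (qpoch (p / a) p r * qpoch (p / c) p r / (qpoch (p * a) p r * qpoch (p * c) p r) * W))" for r
    unfolding h_def W_def prod.case by (rule sums_mult[OF bailey_weight_sums[OF p a c ac pa pc]])
  have "summable (\<lambda>m. M * norm (a * c) ^ m)"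
    using ac by (intro summable_mult summable_geometric) simp
  moreover have "0 \<le> norm (\<alpha> r) * norm (a * c) ^ r" "0 \<le> M * norm (a * c) ^ m" for r m
    using M(1) by simp_all
  ultimately obtain S where diag: "(\<lambda>n. \<Sum>r\<le>n. h (r, n - r)) sums S"
    and rows: "(\<lambda>r. \<alpha> r * (a * c) ^ r
      * (qpoch (p / a) p r * qpoch (p / c) p r / (qpoch (p * a) p r * qpoch (p * c) p r) * W)) sums S"
    using diagonal_sums_eq_row_sums[OF bound _ \<alpha> _ _ row_sums] by blast
  show ?thesis
  proof
    have "(\<Sum>r\<le>n. h (r, n - r)) = qpoch (p / a) p n * qpoch (p / c) p n * (a * c) ^ n * \<beta> n" for n
      unfolding \<beta> sum_distrib_left h_def prod.case
      by (intro sum.cong refl) (simp add: mult.assoc bailey_weight_diagonal)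
    then show "(\<lambda>n. qpoch (p / a) p n * qpoch (p / c) p n * (a * c) ^ n * \<beta> n) sums S"
      using diag by simp
  next
    have "qpoch_inf p p \<noteq> 0" "qpoch_inf (a * c) p \<noteq> 0"
      using p ac by (intro qpoch_inf_neq_0 self_mult_power_neq_1 mult_power_neq_1; simp)+
    moreover have "qpoch_inf (p * a) p \<noteq> 0" "qpoch_inf (p * c) p \<noteq> 0"
      by (intro qpoch_inf_neq_0_if_qpoch_neq_0[OF p] pa pc)+
    ultimately have "W \<noteq> 0"
      by (simp add: W_def)
    with sums_mult[OF rows, of "inverse W"]
    show "(\<lambda>n. qpoch (p / a) p n * qpoch (p / c) p n * (a * c) ^ n * \<alpha> n
                / (qpoch (p * a) p n * qpoch (p * c) p n))
         sums (qpoch_inf p p * qpoch_inf (a * c) p / (qpoch_inf (p * a) p * qpoch_inf (p * c) p) * S)"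
      by (simp add: W_def field_simps)
  qed
qed

section \<open>Rogers-Szego polynomials\<close>

(* H_N(z; p) / (p;p)_N for the Rogers-Szego polynomial H_N(z; p) = sum_m [N choose m]_p z^m *)
definition rogers_szego :: "complex \<Rightarrow> complex \<Rightarrow> nat \<Rightarrow> complex" where
  "rogers_szego p z N = (\<Sum>m\<le>N. z ^ m / (qpoch p p m * qpoch p p (N - m)))"

lemma sum_rogers_szego_lower:
  assumes nz: "\<And>n. qpoch p p n \<noteq> 0"
  shows "(\<Sum>m\<le>Suc N. z ^ m * (1 - p ^ m) / (qpoch p p m * qpoch p p (Suc N - m)))
       = z * rogers_szego p z N"
proof -
  have "(\<Sum>m\<le>Suc N. z ^ m * (1 - p ^ m) / (qpoch p p m * qpoch p p (Suc N - m)))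
      = (\<Sum>m\<le>N. z ^ Suc m * (1 - p ^ Suc m) / (qpoch p p (Suc m) * qpoch p p (N - m)))"
    by (subst sum.atMost_Suc_shift) simp
  also have "\<dots> = (\<Sum>m\<le>N. z * (z ^ m / (qpoch p p m * qpoch p p (N - m))))"
  proof (rule sum.cong[OF refl])
    fix m
    have "1 - p ^ Suc m \<noteq> 0"
      using nz[of "Suc m"] by (auto simp: qpoch_self_Suc)
    then show "z ^ Suc m * (1 - p ^ Suc m) / (qpoch p p (Suc m) * qpoch p p (N - m))
        = z * (z ^ m / (qpoch p p m * qpoch p p (N - m)))"
      by (simp add: qpoch_self_Suc)
  qed
  finally show ?thesis
    by (simp add: rogers_szego_def sum_distrib_left)
qed

lemma sum_rogers_szego_upper:
  assumes nz: "\<And>n. qpoch p p n \<noteq> 0"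
  shows "(\<Sum>m\<le>Suc N. (z * p) ^ m * (1 - p ^ (Suc N - m)) / (qpoch p p m * qpoch p p (Suc N - m)))
       = rogers_szego p (z * p) N"
  unfolding rogers_szego_def
proof (subst sum.atMost_Suc, simp, rule sum.cong[OF refl])
  fix m assume "m \<in> {..N}"
  then have N: "Suc N - m = Suc (N - m)"
    by auto
  have "1 - p ^ Suc (N - m) \<noteq> 0"
    using nz[of "Suc (N - m)"] by (auto simp: qpoch_self_Suc)
  then show "(z * p) ^ m * (1 - p ^ (Suc N - m)) / (qpoch p p m * qpoch p p (Suc N - m))
      = (z * p) ^ m / (qpoch p p m * qpoch p p (N - m))"
    unfolding N by (simp add: qpoch_self_Suc)
qed

lemma rogers_szego_diff:
  assumes nz: "\<And>n. qpoch p p n \<noteq> 0"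
  shows "rogers_szego p z (Suc N) - rogers_szego p (z * p) (Suc N) = z * rogers_szego p z N"
proof -
  have "rogers_szego p z (Suc N) - rogers_szego p (z * p) (Suc N)
      = (\<Sum>m\<le>Suc N. z ^ m * (1 - p ^ m) / (qpoch p p m * qpoch p p (Suc N - m)))"
    unfolding rogers_szego_def sum_subtractf[symmetric]
    by (rule sum.cong[OF refl]) (simp add: diff_divide_distrib algebra_simps)
  then show ?thesis
    using sum_rogers_szego_lower[OF nz] by simp
qed

lemma rogers_szego_Suc:
  assumes nz: "\<And>n. qpoch p p n \<noteq> 0"
  shows "(1 - p ^ Suc N) * rogers_szego p z (Suc N) = z * rogers_szego p z N + rogers_szego p (z * p) N"
proof -
  have "(1 - p ^ Suc N) * rogers_szego p z (Suc N)
      = (\<Sum>m\<le>Suc N. z ^ m * (1 - p ^ m) / (qpoch p p m * qpoch p p (Suc N - m))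
          + (z * p) ^ m * (1 - p ^ (Suc N - m)) / (qpoch p p m * qpoch p p (Suc N - m)))"
    unfolding rogers_szego_def sum_distrib_left
  proof (rule sum.cong[OF refl])
    fix m assume "m \<in> {..Suc N}"
    then have "p ^ m * p ^ (Suc N - m) = p ^ Suc N"
      by (simp add: power_add[symmetric])
    then show "(1 - p ^ Suc N) * (z ^ m / (qpoch p p m * qpoch p p (Suc N - m)))
        = z ^ m * (1 - p ^ m) / (qpoch p p m * qpoch p p (Suc N - m))
          + (z * p) ^ m * (1 - p ^ (Suc N - m)) / (qpoch p p m * qpoch p p (Suc N - m))"
      by (simp add: add_divide_distrib[symmetric] algebra_simps)
  qed
  also have "\<dots> = z * rogers_szego p z N + rogers_szego p (z * p) N"
    by (simp only: sum.distrib sum_rogers_szego_lower[OF nz] sum_rogers_szego_upper[OF nz])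
  finally show ?thesis .
qed

lemma rogers_szego_recurrence:
  assumes "\<And>n. qpoch p p n \<noteq> 0"
  shows "(1 - p ^ Suc (Suc N)) * rogers_szego p z (Suc (Suc N))
       = (1 + z) * rogers_szego p z (Suc N) - z * rogers_szego p z N"
  using rogers_szego_Suc[OF assms, of "Suc N" z] rogers_szego_diff[OF assms, of z N]
  by (simp add: algebra_simps)

lemma rogers_szego_q_square:
  fixes q :: complex
  assumes q: "norm q < 1"
  shows "rogers_szego (q^2) q N = 1 / qpoch q q N"
proof (induction N rule: induct_nat_012)
  case 0
  show ?case
    by (simp add: rogers_szego_def)
next
  case 1
  have "1 - q \<noteq> 0" "1 - q^2 \<noteq> 0"
    using one_pm_power_neq_0(1)[OF q, of 1] one_pm_power_neq_0(1)[OF q, of 2] by simp_all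
  then show ?case
    by (simp add: rogers_szego_def qpoch_Suc field_simps power2_eq_square)
next
  case (ge2 N)
  define a where "a = q ^ Suc N"
  define Q where "Q = qpoch q q N"
  have Q: "qpoch q q (Suc N) = Q * (1 - a)" "qpoch q q (Suc (Suc N)) = Q * (1 - a) * (1 - q * a)"
    by (simp_all add: Q_def a_def qpoch_Suc)
  have "Q \<noteq> 0" "1 - a \<noteq> 0" "1 - q * a \<noteq> 0" "1 + q * a \<noteq> 0"
    using qpoch_self_neq_0[OF q] one_pm_power_neq_0[OF q, of "Suc N"]
      one_pm_power_neq_0[OF q, of "Suc (Suc N)"] by (simp_all add: Q_def a_def)
  moreover have sq: "1 - (q * a)^2 = (1 - q * a) * (1 + q * a)"
    by (simp add: power2_eq_square algebra_simps)
  ultimately have nz: "1 - (q * a)^2 \<noteq> 0"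
    by simp
  have "(q^2) ^ Suc (Suc N) = (q * a)^2"
    by (simp add: a_def power_mult[symmetric] power_mult_distrib mult.commute)
  then have "(1 - (q * a)^2) * rogers_szego (q^2) q (Suc (Suc N))
      = (1 + q) * (1 / (Q * (1 - a))) - q * (1 / Q)"
    using rogers_szego_recurrence[OF qpoch_self_neq_0, of "q^2" N q] ge2.IH q
    by (simp add: Q Q_def norm_power power_less_one_iff)
  also have "\<dots> = (1 + q * a) / (Q * (1 - a))"
    using \<open>Q \<noteq> 0\<close> \<open>1 - a \<noteq> 0\<close> by (simp add: field_simps)
  also have "\<dots> = (1 - (q * a)^2) * (1 / qpoch q q (Suc (Suc N)))"
    unfolding sq Q(2) using \<open>1 - q * a \<noteq> 0\<close> by simp
  finally show ?case
    using mult_left_cancel[OF nz] by blast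
qed

section \<open>A Bailey pair\<close>

definition bailey_alpha :: "complex \<Rightarrow> nat \<Rightarrow> complex" where
  "bailey_alpha q r = (1 - q ^ (2 * r + 1)) * (\<Sum>j\<in>{- int r..int r}. q powi (int r ^ 2 - j ^ 2 - j))"

lemma q_pow_square_tail_step:
  fixes q :: complex
  assumes q: "norm q < 1" and "k < n"
  shows "(1 - q ^ (2 * k + 1)) * q ^ (k^2)
           / (qpoch (q^2) (q^2) (n - k) * qpoch (q^2) (q^2) (n + k + 1))
         + q ^ (Suc k)^2
           / ((1 + q ^ (2 * n + 1)) * qpoch (q^2) (q^2) (n - Suc k) * qpoch (q^2) (q^2) (n + Suc k))
       = q ^ (k^2) / ((1 + q ^ (2 * n + 1)) * qpoch (q^2) (q^2) (n - k) * qpoch (q^2) (q^2) (n + k))"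
proof -
  obtain d where nd: "n = k + Suc d"
    using less_imp_Suc_add[OF assms(2)] by auto
  define P where "P = qpoch (q^2) (q^2)"
  define u where "u = q ^ (2 * k + 1)"
  define v where "v = q ^ (2 * d + 2)"
  have uv: "q ^ (2 * n + 1) = u * v" "q ^ (2 * (n + k) + 2) = u^2 * v" "q ^ (Suc k)^2 = q ^ (k^2) * u"
    unfolding u_def v_def power_mult[symmetric] power_add[symmetric]
    by (intro arg_cong[where f = "power q"]; simp add: nd power2_eq_square)+
  have idx: "n - k = Suc d" "n - Suc k = d" "n + k + 1 = Suc (n + k)" "n + Suc k = Suc (n + k)"
    using nd by auto
  have P: "P (n - k) = P d * (1 - v)" "P (n - Suc k) = P d"
      "P (n + k + 1) = P (n + k) * (1 - u^2 * v)" "P (n + Suc k) = P (n + k) * (1 - u^2 * v)"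
    unfolding idx P_def qpoch_square_Suc uv(2)[symmetric] by (simp_all only: v_def)
  define Q where "Q = q ^ (k^2)"
  define X where "X = Q / (P d * P (n + k) * (1 - u^2 * v))"
  have "1 - v \<noteq> 0"
    unfolding v_def by (rule one_pm_power_neq_0(1)[OF q]) simp
  moreover have "1 - u^2 * v \<noteq> 0" "1 + u * v \<noteq> 0"
    unfolding uv(1,2)[symmetric] by (rule one_pm_power_neq_0[OF q]; simp)+
  moreover have "(1 - u) * (1 + u * v) + u * (1 - v) = 1 - u^2 * v"
    by (simp add: algebra_simps power2_eq_square)
  ultimately have key: "(1 - u) / (1 - v) + u / (1 + u * v) = (1 - u^2 * v) / ((1 - v) * (1 + u * v))"
    by (simp add: add_frac_eq)
  have "(1 - u) * Q / (P (n - k) * P (n + k + 1))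
        + Q * u / ((1 + u * v) * P (n - Suc k) * P (n + Suc k))
      = X * ((1 - u) / (1 - v) + u / (1 + u * v))"
    unfolding P X_def distrib_left by (simp add: mult_ac)
  also have "\<dots> = Q / ((1 + u * v) * P (n - k) * P (n + k))"
    unfolding key P X_def using \<open>1 - u^2 * v \<noteq> 0\<close> by (simp add: mult_ac)
  finally have "(1 - u) * Q / (P (n - k) * P (n + k + 1))
        + Q * u / ((1 + u * v) * P (n - Suc k) * P (n + Suc k))
      = Q / ((1 + u * v) * P (n - k) * P (n + k))" .
  then show ?thesis
    unfolding uv(1,3) u_def[symmetric] Q_def[symmetric] P_def[symmetric] .
qed

lemma sum_q_pow_square_tail:
  fixes q :: complex
  assumes q: "norm q < 1" and "k \<le> n"
  shows "(\<Sum>r\<in>{k..n}. (1 - q ^ (2 * r + 1)) * q ^ (r^2)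
            / (qpoch (q^2) (q^2) (n - r) * qpoch (q^2) (q^2) (n + r + 1)))
       = q ^ (k^2) / ((1 + q ^ (2 * n + 1)) * qpoch (q^2) (q^2) (n - k) * qpoch (q^2) (q^2) (n + k))"
  using assms(2)
proof (induction k rule: inc_induct)
  case base
  define x where "x = q ^ (2 * n + 1)"
  define Pn where "Pn = qpoch (q^2) (q^2) (n + n)"
  have "2 * (n + n) + 2 = (2 * n + 1) * 2"
    by simp
  then have "q ^ (2 * (n + n) + 2) = x^2"
    by (simp only: x_def power_mult)
  then have PS: "qpoch (q^2) (q^2) (n + n + 1) = Pn * ((1 - x) * (1 + x))"
    using qpoch_square_Suc[of q "n + n"] by (simp add: Pn_def power2_eq_square algebra_simps)
  have "1 - x \<noteq> 0"
    unfolding x_def by (rule one_pm_power_neq_0(1)[OF q]) simp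
  then have "(1 - x) * q ^ (n^2) / (Pn * ((1 - x) * (1 + x))) = q ^ (n^2) / ((1 + x) * Pn)"
    by (metis mult.commute mult.left_commute nonzero_mult_divide_mult_cancel_left)
  then have "(1 - q ^ (2 * n + 1)) * q ^ (n^2)
        / (qpoch (q^2) (q^2) (n - n) * qpoch (q^2) (q^2) (n + n + 1))
      = q ^ (n^2) / ((1 + q ^ (2 * n + 1)) * qpoch (q^2) (q^2) (n - n) * qpoch (q^2) (q^2) (n + n))"
    unfolding diff_self_eq_0 qpoch_0 PS x_def[symmetric] Pn_def[symmetric] by simp
  then show ?case
    by (simp only: atLeastAtMost_singleton sum.insert[OF finite.emptyI] empty_iff
        not_False_eq_True sum.empty add_0_right)
next
  case (step k)
  show ?case
    unfolding sum.atLeast_Suc_atMost[OF less_imp_le[OF step(2)]] step.IH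
    by (rule q_pow_square_tail_step[OF q step(2)])
qed

lemma sum_bailey_alpha_swap:
  fixes q :: complex and D :: "nat \<Rightarrow> complex"
  assumes "q \<noteq> 0"
  shows "(\<Sum>r\<le>n. bailey_alpha q r / D r)
       = (\<Sum>j\<in>{- int n..int n}. q powi (- (j ^ 2) - j)
            * (\<Sum>r\<in>{nat \<bar>j\<bar>..n}. (1 - q ^ (2 * r + 1)) * q ^ (r^2) / D r))"
proof -
  define c where "c r = (1 - q ^ (2 * r + 1)) * q ^ (r^2) / D r" for r
  have powi_split: "q powi (int r ^ 2 - j ^ 2 - j) = q ^ (r^2) * q powi (- (j ^ 2) - j)" for r :: nat and j
  proof -
    have "q powi (int r ^ 2 - j ^ 2 - j) = q powi (int (r^2) + (- (j ^ 2) - j))"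
      by (intro arg_cong[where f = "power_int q"]) simp
    also have "\<dots> = q powi int (r^2) * q powi (- (j ^ 2) - j)"
      by (rule power_int_add) (use assms in auto)
    finally show ?thesis
      by (simp only: power_int_of_nat)
  qed
  have "(\<Sum>r\<le>n. bailey_alpha q r / D r)
      = (\<Sum>r\<in>{..n}. \<Sum>j\<in>{j\<in>{- int n..int n}. \<bar>j\<bar> \<le> int r}. c r * q powi (- (j ^ 2) - j))"
  proof (rule sum.cong[OF refl])
    fix r assume "r \<in> {..n}"
    then have "{j\<in>{- int n..int n}. \<bar>j\<bar> \<le> int r} = {- int r..int r}"
      by auto
    then show "bailey_alpha q r / D r
        = (\<Sum>j\<in>{j\<in>{- int n..int n}. \<bar>j\<bar> \<le> int r}. c r * q powi (- (j ^ 2) - j))"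
      by (simp add: bailey_alpha_def c_def powi_split sum_distrib_left sum_divide_distrib mult_ac)
  qed
  also have "\<dots> = (\<Sum>j\<in>{- int n..int n}. \<Sum>r\<in>{r\<in>{..n}. \<bar>j\<bar> \<le> int r}. c r * q powi (- (j ^ 2) - j))"
    by (rule sum.swap_restrict) auto
  also have "\<dots> = (\<Sum>j\<in>{- int n..int n}. q powi (- (j ^ 2) - j) * (\<Sum>r\<in>{nat \<bar>j\<bar>..n}. c r))"
  proof (rule sum.cong[OF refl])
    fix j :: int
    have "{r\<in>{..n}. \<bar>j\<bar> \<le> int r} = {nat \<bar>j\<bar>..n}"
      by auto
    then show "(\<Sum>r\<in>{r\<in>{..n}. \<bar>j\<bar> \<le> int r}. c r * q powi (- (j ^ 2) - j))
        = q powi (- (j ^ 2) - j) * (\<Sum>r\<in>{nat \<bar>j\<bar>..n}. c r)"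
      by (simp add: sum_distrib_right mult.commute)
  qed
  finally show ?thesis
    by (simp add: c_def)
qed

lemma power_int_square_cancel:
  fixes q :: complex
  assumes "q \<noteq> 0"
  shows "q powi (- (j ^ 2) - j) * q ^ (nat \<bar>j\<bar>)^2 = q powi (- j)"
proof -
  have "int ((nat \<bar>j\<bar>)^2) = j^2"
    by (simp add: power2_eq_square)
  then have "q powi (- (j ^ 2) - j) * q ^ (nat \<bar>j\<bar>)^2 = q powi (- (j ^ 2) - j + j ^ 2)"
    using assms by (metis power_int_add power_int_of_nat)
  then show ?thesis
    by simp
qed

lemma mult_nat_abs_symmetric:
  fixes f :: "nat \<Rightarrow> 'a :: comm_monoid_mult"
  assumes "\<bar>j\<bar> \<le> int n"
  shows "f (n - nat \<bar>j\<bar>) * f (n + nat \<bar>j\<bar>) = f (nat (int n - j)) * f (nat (int n + j))"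
proof (cases "j \<ge> 0")
  case True
  then have "n - nat \<bar>j\<bar> = nat (int n - j)" "n + nat \<bar>j\<bar> = nat (int n + j)"
    using assms by auto
  then show ?thesis
    by simp
next
  case False
  then have "n - nat \<bar>j\<bar> = nat (int n + j)" "n + nat \<bar>j\<bar> = nat (int n - j)"
    using assms by auto
  then show ?thesis
    by (simp add: mult.commute)
qed

lemma sum_power_int_eq_rogers_szego:
  fixes p q :: complex
  assumes "q \<noteq> 0"
  shows "(\<Sum>j\<in>{- int n..int n}. q powi (- j) / (qpoch p p (nat (int n - j)) * qpoch p p (nat (int n + j))))
       = rogers_szego p q (2 * n) / q ^ n"
  unfolding rogers_szego_def sum_divide_distrib
proof (rule sum.reindex_bij_witness[where i = "\<lambda>m. int n - int m" and j = "\<lambda>j. nat (int n - j)"])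
  fix j assume j: "j \<in> {- int n..int n}"
  then have "q powi (- j) = q powi (int (nat (int n - j)) - int n)"
    by simp
  also have "\<dots> = q powi int (nat (int n - j)) / q powi int n"
    by (rule power_int_diff) (use assms in auto)
  also have "\<dots> = q ^ nat (int n - j) / q ^ n"
    by (simp only: power_int_of_nat)
  finally have "q powi (- j) = q ^ nat (int n - j) / q ^ n" .
  moreover have "2 * n - nat (int n - j) = nat (int n + j)"
    using j by auto
  ultimately show "q ^ nat (int n - j)
        / (qpoch p p (nat (int n - j)) * qpoch p p (2 * n - nat (int n - j))) / q ^ n
      = q powi (- j) / (qpoch p p (nat (int n - j)) * qpoch p p (nat (int n + j)))"
    by simp
qed auto

lemma bailey_pair:
  fixes q :: complex
  assumes q: "norm q < 1" and q0: "q \<noteq> 0"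
  shows "1 / (q ^ n * qpoch q q (2 * n) * (1 + q ^ (2 * n + 1)))
       = (\<Sum>r\<le>n. bailey_alpha q r / (qpoch (q^2) (q^2) (n - r) * qpoch (q^2) (q^2) (n + r + 1)))"
proof -
  define P where "P = qpoch (q^2) (q^2)"
  define E where "E = 1 + q ^ (2 * n + 1)"
  have "(\<Sum>r\<le>n. bailey_alpha q r / (P (n - r) * P (n + r + 1)))
      = (\<Sum>j\<in>{- int n..int n}. q powi (- (j ^ 2) - j)
           * (q ^ (nat \<bar>j\<bar>)^2 / (E * P (n - nat \<bar>j\<bar>) * P (n + nat \<bar>j\<bar>))))"
    unfolding sum_bailey_alpha_swap[OF q0] P_def E_def
    by (intro sum.cong refl arg_cong[where f = "(*) _"] sum_q_pow_square_tail[OF q]) auto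
  also have "\<dots> = (\<Sum>j\<in>{- int n..int n}. q powi (- j) / (P (nat (int n - j)) * P (nat (int n + j))) / E)"
  proof (rule sum.cong[OF refl])
    fix j :: int
    assume "j \<in> {- int n..int n}"
    then have "P (n - nat \<bar>j\<bar>) * P (n + nat \<bar>j\<bar>) = P (nat (int n - j)) * P (nat (int n + j))"
      by (intro mult_nat_abs_symmetric) auto
    then show "q powi (- (j ^ 2) - j) * (q ^ (nat \<bar>j\<bar>)^2 / (E * P (n - nat \<bar>j\<bar>) * P (n + nat \<bar>j\<bar>)))
        = q powi (- j) / (P (nat (int n - j)) * P (nat (int n + j))) / E"
      using power_int_square_cancel[OF q0, of j] by (simp add: mult.commute mult.left_commute)
  qed
  also have "\<dots> = rogers_szego (q^2) q (2 * n) / q ^ n / E"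
    unfolding sum_divide_distrib[symmetric] P_def sum_power_int_eq_rogers_szego[OF q0] ..
  also have "\<dots> = 1 / (q ^ n * qpoch q q (2 * n) * E)"
    by (simp add: rogers_szego_q_square[OF q])
  finally show ?thesis
    unfolding P_def E_def by (rule sym)
qed

lemma power_int_le_inverse_power:
  fixes x :: real
  assumes "0 < x" "x \<le> 1" "e \<ge> - int r"
  shows "x powi e \<le> (1 / x) ^ r"
proof -
  have "x powi e = x powi (- int r) * x powi (e + int r)"
    using power_int_add[of x "- int r" "e + int r"] assms(1) by simp
  also have "\<dots> \<le> x powi (- int r)"
    using assms by (intro mult_left_le power_int_le_one) auto
  also have "\<dots> = (1 / x) ^ r"
    by (simp add: power_int_minus power_one_over divide_inverse power_inverse)
  finally show ?thesis .
qed

lemma norm_bailey_alpha_le: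
  fixes q :: complex
  assumes q: "norm q < 1" "q \<noteq> 0"
  shows "norm (bailey_alpha q r) \<le> 2 * real (2 * r + 1) * (1 / norm q) ^ r"
proof -
  have "norm (1 - q ^ (2 * r + 1)) \<le> norm (1 :: complex) + norm (q ^ (2 * r + 1))"
    by (rule norm_triangle_ineq4)
  also have "norm (q ^ (2 * r + 1)) \<le> 1"
    unfolding norm_power using q by (intro power_le_one) auto
  finally have first: "norm (1 - q ^ (2 * r + 1)) \<le> 2"
    by simp
  have "norm (q powi (int r ^ 2 - j ^ 2 - j)) \<le> (1 / norm q) ^ r" if "\<bar>j\<bar> \<le> int r" for j
  proof -
    have "(int r - j) * (int r + j + 1) \<ge> 0"
      using that by (intro mult_nonneg_nonneg) auto
    then have "int r ^ 2 - j ^ 2 - j \<ge> - int r"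
      by (simp add: algebra_simps power2_eq_square)
    then show ?thesis
      unfolding norm_power_int using q by (intro power_int_le_inverse_power) auto
  qed
  then have "norm (\<Sum>j\<in>{- int r..int r}. q powi (int r ^ 2 - j ^ 2 - j))
      \<le> (\<Sum>j\<in>{- int r..int r}. (1 / norm q) ^ r)"
    by (intro order_trans[OF norm_sum] sum_mono) auto
  also have "\<dots> = real (2 * r + 1) * (1 / norm q) ^ r"
    by simp
  finally have "norm (1 - q ^ (2 * r + 1)) * norm (\<Sum>j\<in>{- int r..int r}. q powi (int r ^ 2 - j ^ 2 - j))
      \<le> 2 * (real (2 * r + 1) * (1 / norm q) ^ r)"
    using first by (intro mult_mono) auto
  then show ?thesis
    unfolding bailey_alpha_def norm_mult mult.assoc .
qed

lemma summable_norm_bailey_alpha: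
  fixes q z :: complex
  assumes q: "norm q < 1" "q \<noteq> 0" and z: "norm z < norm q"
  shows "summable (\<lambda>r. norm (bailey_alpha q r) * norm z ^ r)"
proof -
  define x where "x = norm z / norm q"
  have x: "0 \<le> x" "x < 1"
    using q z by (simp_all add: x_def)
  have "norm (bailey_alpha q r) * norm z ^ r \<le> 4 * (real (Suc r) * x ^ r)" for r
  proof -
    have "norm (bailey_alpha q r) * norm z ^ r \<le> 2 * real (2 * r + 1) * (1 / norm q) ^ r * norm z ^ r"
      by (intro mult_right_mono norm_bailey_alpha_le q) auto
    also have "\<dots> = 2 * real (2 * r + 1) * x ^ r"
      by (simp add: x_def power_divide)
    also have "\<dots> \<le> 4 * real (Suc r) * x ^ r"
      using x by (intro mult_right_mono) auto
    finally show ?thesis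
      by (simp only: mult.assoc)
  qed
  then show ?thesis
    by (intro summable_comparison_test'[where N = 0, OF summable_mult[OF summable_of_nat_Suc_mult_power[OF x]]])
      simp
qed

theorem theorem8p4:
  fixes q a c :: complex
  assumes "0 < norm q" and "norm q < 1"
    and "a \<noteq> 0" and "c \<noteq> 0"
    and "\<And>n. qpoch (q^2 * a) (q^2) n \<noteq> 0"
    and "\<And>n. qpoch (q^2 * c) (q^2) n \<noteq> 0"
    and "norm (a * c / q) < 1"
  defines "L \<equiv> (\<lambda>n::nat. qpoch (q^2 / a) (q^2) n * qpoch (q^2 / c) (q^2) n * (a * c / q) ^ n
                 / (qpoch q q (2 * n) * (1 + q ^ (2 * n + 1))))"
    and "R \<equiv> (\<lambda>n::nat. \<Sum>j\<in>{- int n..int n}.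
                 (1 - q ^ (2 * n + 1)) * q powi (int n ^ 2 - j ^ 2 - j)
                 * qpoch (q^2 / a) (q^2) n * qpoch (q^2 / c) (q^2) n * (a * c) ^ n
                 / (qpoch (q^2 * a) (q^2) n * qpoch (q^2 * c) (q^2) n))"
  shows "summable L \<and> summable R \<and>
         qpoch_inf (q^2) (q^2) * qpoch_inf (a * c) (q^2)
           / (qpoch_inf (q^2 * a) (q^2) * qpoch_inf (q^2 * c) (q^2)) * (\<Sum>n. L n)
         = (\<Sum>n. R n)"
proof -
  have q: "norm q < 1" "q \<noteq> 0"
    using assms(1,2) by auto
  have ac: "norm (a * c) < norm q"
    using assms(1,7) by (simp add: norm_divide divide_less_eq)
  have p: "norm (q^2) < 1"
    using q by (simp add: norm_power power_less_one_iff)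
  have L: "L = (\<lambda>n. qpoch (q^2 / a) (q^2) n * qpoch (q^2 / c) (q^2) n * (a * c) ^ n
                * (1 / (q ^ n * qpoch q q (2 * n) * (1 + q ^ (2 * n + 1)))))"
    by (simp add: L_def power_divide fun_eq_iff)
  have R: "R = (\<lambda>n. qpoch (q^2 / a) (q^2) n * qpoch (q^2 / c) (q^2) n * (a * c) ^ n
                * bailey_alpha q n / (qpoch (q^2 * a) (q^2) n * qpoch (q^2 * c) (q^2) n))"
    by (simp add: R_def bailey_alpha_def sum_distrib_left sum_distrib_right sum_divide_distrib
        mult_ac fun_eq_iff)
  obtain S where "L sums S" and "R sums (qpoch_inf (q^2) (q^2) * qpoch_inf (a * c) (q^2)
      / (qpoch_inf (q^2 * a) (q^2) * qpoch_inf (q^2 * c) (q^2)) * S)"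
    unfolding L R
    by (rule bailey_lemma_sums[OF p assms(3,4) _ assms(5,6) summable_norm_bailey_alpha[OF q ac]
        bailey_pair[OF q]]) (use ac q in simp_all)
  then show ?thesis
    by (auto simp: sums_iff)
qed

end
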